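(* Let $Q\subset\mathbb{R}^2$ be a compact convex region, let $\phi:Q\to[0,\infty)$ be an integrable density, and let $p_1,\dots,p_n\in Q$ be pairwise distinct sensor positions. Write $\|q,p\|$ for the Euclidean distance. Let $f:[0,\infty)^2\to\mathbb{R}$ be differentiable and satisfy, for all $a,b\ge0$: $\frac{\partial f}{\partial a}(a,b)\ge 0$, $\frac{\partial f}{\partial b}(a,b)\ge 0$, and $f(a,b)=f(b,a)$. Let $C=\{(i,j): i,j\in\{1,\dots,n\},\ i<j\}$ and for $(i,j)\in C$ let $$V_{\mathcal{T}_{ij}}=\{q\in Q \mid \|q,p_i\|\le \|q,p_m\| \text{ and } \|q,p_j\|\le \|q,p_m\| \text{ for all } m\notin\{i,j\}\}.$$ Then $$\int_Q \min_{(i,j)\in C} f(\|q,p_i\|,\|q,p_j\|)\,\phi(q)\,dq=\sum_{(i,j)\in C}\int_{V_{\mathcal{T}_{ij}}} f(\|q,p_i\|,\|q,p_j\|)\,\phi(q)\,dq.$$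
   Context: The left-hand side is the order-2 coverage performance function $\mathcal{H}(p_1,\dots,p_n)$. The sets $V_{\mathcal{T}_{ij}}$ are the cells of the order-2 Voronoi partition of $Q$ generated by $p_1,\dots,p_n$ (empty cells contribute zero). *)

theory Defs
  imports "HOL-Analysis.Analysis"
begin

definition pairs :: "nat \<Rightarrow> (nat \<times> nat) set" where
  "pairs n = {(i, j). i \<in> {1..n} \<and> j \<in> {1..n} \<and> i < j}"

definition order2_cell ::
  "(real^2) set \<Rightarrow> nat \<Rightarrow> (nat \<Rightarrow> real^2) \<Rightarrow> nat \<Rightarrow> nat \<Rightarrow> (real^2) set" where
  "order2_cell Q n p i j = {q \<in> Q. \<forall>m \<in> {1..n} - {i, j}.
       dist q (p i) \<le> dist q (p m) \<and> dist q (p j) \<le> dist q (p m)}"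

end

theory Submission
  imports Defs
begin

text \<open>On the cell \<open>V_ij\<close> the sites \<open>p_i\<close>, \<open>p_j\<close> are the two nearest ones, so by monotonicity
and symmetry of \<open>f\<close> the minimum over all pairs is attained at \<open>(i, j)\<close>. The cells cover \<open>Q\<close>,
and two different cells can only meet at points equidistant from two distinct sites, i.e.\ on
finitely many lines, which form a null set. Hence the integral over \<open>Q\<close> splits into the sum of
the integrals over the cells.\<close>

lemma dist_eq_dist_null_sets:
  fixes a b :: "'a::euclidean_space"
  assumes "a \<noteq> b"
  shows "{q. dist q a = dist q b} \<in> null_sets lborel"
proof -
  have "dist q a = dist q b \<longleftrightarrow> (2 *\<^sub>R (b - a)) \<bullet> q = b \<bullet> b - a \<bullet> a" for q
  proof -
    have "dist q a = dist q b \<longleftrightarrow> (q - a) \<bullet> (q - a) = (q - b) \<bullet> (q - b)"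
      by (simp add: dist_norm norm_eq_sqrt_inner)
    also have "\<dots> \<longleftrightarrow> (2 *\<^sub>R (b - a)) \<bullet> q = b \<bullet> b - a \<bullet> a"
      by (simp add: inner_diff_left inner_diff_right inner_commute algebra_simps)
    finally show ?thesis .
  qed
  then have "negligible {q. dist q a = dist q b}"
    using negligible_hyperplane[of "2 *\<^sub>R (b - a)"] assms by simp
  moreover have "closed {q. dist q a = dist q b}"
    by (intro closed_Collect_eq continuous_intros)
  ultimately show ?thesis
    by (auto simp: null_sets_completion_iff negligible_iff_null_sets borel_closed)
qed

lemma AE_inj_on_dist:
  fixes p :: "'b \<Rightarrow> 'a::euclidean_space"
  assumes "finite I" and "inj_on p I"
  shows "AE q in lborel. inj_on (\<lambda>m. dist q (p m)) I"
proof -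
  have "AE q in lborel. \<forall>k\<in>I \<times> I. fst k \<noteq> snd k \<longrightarrow> dist q (p (fst k)) \<noteq> dist q (p (snd k))"
  proof (rule AE_finite_allI)
    fix k assume "k \<in> I \<times> I"
    with assms(2) have "fst k \<noteq> snd k \<longrightarrow> p (fst k) \<noteq> p (snd k)"
      by (auto dest: inj_onD)
    then show "AE q in lborel. fst k \<noteq> snd k \<longrightarrow> dist q (p (fst k)) \<noteq> dist q (p (snd k))"
    proof (cases "fst k = snd k")
      case False
      with \<open>fst k \<noteq> snd k \<longrightarrow> p (fst k) \<noteq> p (snd k)\<close>
      have "{q. dist q (p (fst k)) = dist q (p (snd k))} \<in> null_sets lborel"
        by (intro dist_eq_dist_null_sets) simp
      from AE_not_in[OF this] show ?thesis
        by eventually_elim simp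
    qed simp
  qed (use assms(1) in simp)
  then show ?thesis
  proof eventually_elim
    case (elim q)
    show ?case
    proof (rule inj_onI)
      fix i j assume "i \<in> I" "j \<in> I" "dist q (p i) = dist q (p j)"
      then show "i = j" using elim[rule_format, of "(i, j)"] by auto
    qed
  qed
qed

lemma mono_on_atLeast_of_nonneg_deriv:
  fixes h :: "real \<Rightarrow> real"
  assumes diff: "\<And>t. a \<le> t \<Longrightarrow> h differentiable at t within {a..}"
    and deriv_nonneg: "\<And>t D. a \<le> t \<Longrightarrow> (h has_real_derivative D) (at t within {a..}) \<Longrightarrow> 0 \<le> D"
  shows "mono_on {a..} h"
proof (rule mono_onI)
  fix x y assume "x \<in> {a..}" "y \<in> {a..}" "x \<le> y"
  then have xy: "a \<le> x" "x \<le> y" by auto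
  have "h differentiable_on {x..y}"
    unfolding differentiable_on_def
    using xy by (auto intro: differentiable_within_subset[OF diff])
  then have cont: "continuous_on {x..y} h"
    by (rule differentiable_imp_continuous_on)
  show "h x \<le> h y"
  proof (rule DERIV_nonneg_imp_increasing_open[OF xy(2) _ cont])
    fix t assume t: "x < t" "t < y"
    have "h differentiable at t within {a..}"
      using diff t xy by simp
    then obtain D where D: "(h has_real_derivative D) (at t within {a..})"
      unfolding real_differentiable_def ..
    have "at t within {a..} = at t"
      by (rule at_within_interior) (use t xy in auto)
    then show "\<exists>D. (h has_real_derivative D) (at t) \<and> 0 \<le> D"
      using D deriv_nonneg[OF _ D] t xy by auto
  qed
qed

lemma differentiable_on_quadrant_partials:
  fixes f :: "real \<times> real \<Rightarrow> real"
  assumes "f differentiable_on {x. fst x \<ge> 0 \<and> snd x \<ge> 0}" and "0 \<le> a" and "0 \<le> t"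
  shows "(\<lambda>t. f (t, a)) differentiable at t within {0..}"
    and "(\<lambda>t. f (a, t)) differentiable at t within {0..}"
proof -
  let ?S = "{x::real \<times> real. fst x \<ge> 0 \<and> snd x \<ge> 0}"
  have "f differentiable at (t, a) within ?S" "f differentiable at (a, t) within ?S"
    using assms unfolding differentiable_on_def by auto
  then have "f differentiable at (t, a) within (\<lambda>t. (t, a)) ` {0..}"
    and "f differentiable at (a, t) within (\<lambda>t. (a, t)) ` {0..}"
    by (auto elim!: differentiable_within_subset simp: \<open>0 \<le> a\<close>)
  moreover have "(\<lambda>t. (t, a)) differentiable at t within {0..}"
    and "(\<lambda>t. (a, t)) differentiable at t within {0..}"
    by (auto intro!: derivative_intros)
  ultimately show "(\<lambda>t. f (t, a)) differentiable at t within {0..}"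
    and "(\<lambda>t. f (a, t)) differentiable at t within {0..}"
    using differentiable_chain_within[unfolded o_def] by blast+
qed

lemma mono_of_nonneg_partial_derivs:
  fixes f :: "real \<times> real \<Rightarrow> real"
  assumes diff: "f differentiable_on {x. fst x \<ge> 0 \<and> snd x \<ge> 0}"
    and deriv_fst: "\<And>a b D. a \<ge> 0 \<Longrightarrow> b \<ge> 0 \<Longrightarrow>
           ((\<lambda>t. f (t, b)) has_real_derivative D) (at a within {0..}) \<Longrightarrow> D \<ge> 0"
    and deriv_snd: "\<And>a b D. a \<ge> 0 \<Longrightarrow> b \<ge> 0 \<Longrightarrow>
           ((\<lambda>t. f (a, t)) has_real_derivative D) (at b within {0..}) \<Longrightarrow> D \<ge> 0"
    and "0 \<le> x" "x \<le> x'" "0 \<le> y" "y \<le> y'"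
  shows "f (x, y) \<le> f (x', y')"
proof -
  have "mono_on {0..} (\<lambda>t. f (t, y))"
  proof (rule mono_on_atLeast_of_nonneg_deriv)
    fix t :: real assume "0 \<le> t"
    then show "(\<lambda>t. f (t, y)) differentiable at t within {0..}"
      using differentiable_on_quadrant_partials(1)[OF diff \<open>0 \<le> y\<close>] by blast
    show "0 \<le> D" if "((\<lambda>t. f (t, y)) has_real_derivative D) (at t within {0..})" for D
      using deriv_fst[OF \<open>0 \<le> t\<close> \<open>0 \<le> y\<close> that] .
  qed
  moreover have "mono_on {0..} (\<lambda>t. f (x', t))"
  proof (rule mono_on_atLeast_of_nonneg_deriv)
    have "0 \<le> x'" using assms(4,5) by linarith
    fix t :: real assume "0 \<le> t"
    then show "(\<lambda>t. f (x', t)) differentiable at t within {0..}"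
      using differentiable_on_quadrant_partials(2)[OF diff \<open>0 \<le> x'\<close>] by blast
    show "0 \<le> D" if "((\<lambda>t. f (x', t)) has_real_derivative D) (at t within {0..})" for D
      using deriv_snd[OF \<open>0 \<le> x'\<close> \<open>0 \<le> t\<close> that] .
  qed
  ultimately have "f (x, y) \<le> f (x', y)" "f (x', y) \<le> f (x', y')"
    using assms(4-7) by (auto intro: mono_onD)
  then show ?thesis by linarith
qed

definition two_nearest :: "'a set \<Rightarrow> ('a \<Rightarrow> real) \<Rightarrow> 'a \<Rightarrow> 'a \<Rightarrow> bool" where
  "two_nearest I d i j \<longleftrightarrow> (\<forall>m \<in> I - {i, j}. d i \<le> d m \<and> d j \<le> d m)"

lemma two_nearest_commute: "two_nearest I d i j \<longleftrightarrow> two_nearest I d j i"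
  by (auto simp: two_nearest_def)

lemma order2_cell_eq: "order2_cell Q n p i j = {q \<in> Q. two_nearest {1..n} (\<lambda>m. dist q (p m)) i j}"
  by (simp add: order2_cell_def two_nearest_def)

lemma two_nearest_exists:
  fixes I :: "'a::linorder set"
  assumes "finite I" and "2 \<le> card I"
  obtains i j where "i \<in> I" "j \<in> I" "i < j" "two_nearest I d i j"
proof -
  define i where "i = arg_min_on d I"
  define j where "j = arg_min_on d (I - {i})"
  have "I \<noteq> {}" using assms(2) by auto
  then have i: "i \<in> I" "\<And>m. m \<in> I \<Longrightarrow> d i \<le> d m"
    unfolding i_def using assms(1) by (auto intro: arg_min_if_finite(1) arg_min_least)
  have "card (I - {i}) = card I - 1"
    using i(1) by (rule card_Diff_singleton)
  then have "card (I - {i}) \<noteq> 0" using assms(2) by arith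
  then have "I - {i} \<noteq> {}" by (metis card.empty)
  moreover have "finite (I - {i})" using assms(1) by simp
  ultimately have j: "j \<in> I - {i}" "\<And>m. m \<in> I - {i} \<Longrightarrow> d j \<le> d m"
    unfolding j_def by (metis arg_min_if_finite(1), metis arg_min_least)
  have "two_nearest I d i j"
    using i j by (auto simp: two_nearest_def)
  moreover have "i \<noteq> j" using j(1) by blast
  ultimately show thesis
    using that i(1) j(1) two_nearest_commute[of I d i j] by (metis DiffD1 linorder_neq_iff)
qed

lemma two_nearest_unique:
  fixes I :: "'a::linorder set"
  assumes "inj_on d I" and "i \<in> I" "j \<in> I" "a \<in> I" "b \<in> I" "i < j" "a < b"
    and "two_nearest I d i j" "two_nearest I d a b"
  shows "(i, j) = (a, b)"
proof (rule ccontr)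
  assume "(i, j) \<noteq> (a, b)"
  with \<open>i < j\<close> \<open>a < b\<close> have "\<not> {a, b} \<subseteq> {i, j}" "\<not> {i, j} \<subseteq> {a, b}"
    by auto
  then obtain m m' where "m \<in> {a, b}" "m \<notin> {i, j}" "m' \<in> {i, j}" "m' \<notin> {a, b}"
    by blast
  with assms(8,9) have "d m' \<le> d m" "d m \<le> d m'"
    using assms(2-5) unfolding two_nearest_def by blast+
  then have "m = m'"
    using assms(1-5) \<open>m \<in> {a, b}\<close> \<open>m' \<in> {i, j}\<close> by (auto dest: inj_onD)
  with \<open>m \<notin> {i, j}\<close> \<open>m' \<in> {i, j}\<close> show False by simp
qed

lemma two_nearest_le_some_order:
  assumes "two_nearest I d i j" and "a \<in> I" "b \<in> I" "a \<noteq> b"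
  shows "d i \<le> d a \<and> d j \<le> d b \<or> d i \<le> d b \<and> d j \<le> d a"
  using assms unfolding two_nearest_def
  by (cases "a = i"; cases "a = j"; cases "b = i"; cases "b = j") auto

lemma finite_pairs: "finite (pairs n)"
  by (rule finite_subset[of _ "{1..n} \<times> {1..n}"]) (auto simp: pairs_def)

lemma closed_order2_cell:
  assumes "closed Q"
  shows "closed (order2_cell Q n p i j)"
proof -
  have "order2_cell Q n p i j = Q \<inter> (\<Inter>m \<in> {1..n} - {i, j}.
      {q. dist q (p i) \<le> dist q (p m)} \<inter> {q. dist q (p j) \<le> dist q (p m)})"
    by (auto simp: order2_cell_def)
  also have "closed \<dots>"
    by (intro closed_Int assms closed_INT ballI closed_Collect_le continuous_intros)
  finally show ?thesis .
qed

lemma order2_cells_cover: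
  assumes "2 \<le> n"
  shows "(\<Union>(i, j) \<in> pairs n. order2_cell Q n p i j) = Q"
proof
  show "Q \<subseteq> (\<Union>(i, j) \<in> pairs n. order2_cell Q n p i j)"
  proof
    fix q assume "q \<in> Q"
    obtain i j where "i \<in> {1..n}" "j \<in> {1..n}" "i < j"
        "two_nearest {1..n} (\<lambda>m. dist q (p m)) i j"
      using two_nearest_exists[of "{1..n}"] assms by auto
    with \<open>q \<in> Q\<close> show "q \<in> (\<Union>(i, j) \<in> pairs n. order2_cell Q n p i j)"
      unfolding pairs_def order2_cell_eq by blast
  qed
qed (auto simp: order2_cell_def)

lemma AE_order2_cells_disjoint:
  assumes "inj_on p {1..n}" and "k \<in> pairs n" "l \<in> pairs n"
  shows "AE q in lborel. q \<in> order2_cell Q n p (fst k) (snd k) \<and>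
      q \<in> order2_cell Q n p (fst l) (snd l) \<longrightarrow> k = l"
  using AE_inj_on_dist[OF finite_atLeastAtMost assms(1)]
proof eventually_elim
  case (elim q)
  then show ?case
    using two_nearest_unique[OF elim, of "fst k" "snd k" "fst l" "snd l"] assms(2,3)
    by (auto simp: pairs_def order2_cell_eq)
qed

lemma Min_pairs_on_order2_cell:
  fixes g :: "real \<times> real \<Rightarrow> real"
  assumes mono: "\<And>x x' y y'. 0 \<le> x \<Longrightarrow> x \<le> x' \<Longrightarrow> 0 \<le> y \<Longrightarrow> y \<le> y' \<Longrightarrow> g (x, y) \<le> g (x', y')"
    and sym: "\<And>a b. 0 \<le> a \<Longrightarrow> 0 \<le> b \<Longrightarrow> g (a, b) = g (b, a)"
    and "(i, j) \<in> pairs n" and "q \<in> order2_cell Q n p i j"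
  shows "Min ((\<lambda>(a, b). g (dist q (p a), dist q (p b))) ` pairs n) = g (dist q (p i), dist q (p j))"
proof (rule Min_eqI)
  let ?d = "\<lambda>m. dist q (p m)"
  fix y assume "y \<in> (\<lambda>(a, b). g (?d a, ?d b)) ` pairs n"
  then obtain a b where ab: "(a, b) \<in> pairs n" and y: "y = g (?d a, ?d b)"
    by auto
  have "?d i \<le> ?d a \<and> ?d j \<le> ?d b \<or> ?d i \<le> ?d b \<and> ?d j \<le> ?d a"
    using assms(4) ab by (intro two_nearest_le_some_order) (auto simp: order2_cell_eq pairs_def)
  then show "g (?d i, ?d j) \<le> y"
    unfolding y using mono sym by (metis zero_le_dist)
qed (use assms(3) finite_pairs in force)+

lemma set_integrable_continuous_mult:
  fixes g \<phi> :: "'a::euclidean_space \<Rightarrow> real"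
  assumes "compact A" and "continuous_on UNIV g" and "set_integrable lborel A \<phi>"
  shows "set_integrable lborel A (\<lambda>x. g x * \<phi> x)"
proof -
  obtain B where B: "\<And>x. x \<in> A \<Longrightarrow> norm (g x) \<le> B"
    using compact_imp_bounded[OF compact_continuous_image[OF continuous_on_subset[OF assms(2)] assms(1)]]
    unfolding bounded_iff by auto
  show ?thesis
  proof (rule set_integrable_bound[OF set_integrable_mult_right[of B, OF assms(3)]])
    have "(\<lambda>x. indicator A x *\<^sub>R \<phi> x) \<in> borel_measurable lborel"
      using assms(3) unfolding set_integrable_def by (rule borel_measurable_integrable)
    moreover have "g \<in> borel_measurable lborel"
      using borel_measurable_continuous_onI[OF assms(2)] by simp
    ultimately show "set_borel_measurable lborel A (\<lambda>x. g x * \<phi> x)"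
      unfolding set_borel_measurable_def by (auto simp: mult.left_commute)
    show "AE x in lborel. x \<in> A \<longrightarrow> norm (g x * \<phi> x) \<le> norm (B * \<phi> x)"
    proof (rule AE_I2, rule impI)
      fix x assume "x \<in> A"
      then have "\<bar>g x\<bar> \<le> \<bar>B\<bar>" using B[of x] by simp
      then show "norm (g x * \<phi> x) \<le> norm (B * \<phi> x)"
        by (simp add: abs_mult mult_right_mono)
    qed
  qed
qed

theorem lemma2:
  fixes Q :: "(real^2) set"
    and \<phi> :: "real^2 \<Rightarrow> real"
    and p :: "nat \<Rightarrow> real^2"
    and n :: nat
    and f :: "real \<times> real \<Rightarrow> real"
  assumes "compact Q" and "convex Q"
    and "set_integrable lborel Q \<phi>"
    and "\<And>q. q \<in> Q \<Longrightarrow> \<phi> q \<ge> 0"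
    and "n \<ge> 2"
    and "\<And>i. i \<in> {1..n} \<Longrightarrow> p i \<in> Q"
    and "inj_on p {1..n}"
    and "f differentiable_on {x. fst x \<ge> 0 \<and> snd x \<ge> 0}"
    and "\<And>a b D. a \<ge> 0 \<Longrightarrow> b \<ge> 0 \<Longrightarrow>
           ((\<lambda>t. f (t, b)) has_real_derivative D) (at a within {0..}) \<Longrightarrow> D \<ge> 0"
    and "\<And>a b D. a \<ge> 0 \<Longrightarrow> b \<ge> 0 \<Longrightarrow>
           ((\<lambda>t. f (a, t)) has_real_derivative D) (at b within {0..}) \<Longrightarrow> D \<ge> 0"
    and "\<And>a b. a \<ge> 0 \<Longrightarrow> b \<ge> 0 \<Longrightarrow> f (a, b) = f (b, a)"
  shows "(LINT q:Q|lborel.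
            Min ((\<lambda>(i, j). f (dist q (p i), dist q (p j))) ` pairs n) * \<phi> q)
       = (\<Sum>(i, j)\<in>pairs n.
            LINT q:order2_cell Q n p i j|lborel. f (dist q (p i), dist q (p j)) * \<phi> q)"
proof -
  let ?M = "\<lambda>q. Min ((\<lambda>(i, j). f (dist q (p i), dist q (p j))) ` pairs n)"
  define F where "F k q = f (dist q (p (fst k)), dist q (p (snd k)))" for k q
  define C where "C k = order2_cell Q n p (fst k) (snd k)" for k
  have C_sets: "C k \<in> sets lborel" for k
    using closed_order2_cell[OF compact_imp_closed[OF assms(1)]] by (simp add: C_def borel_closed)
  have F_cont: "continuous_on UNIV (F k)" for k
    unfolding F_def
    by (rule continuous_on_compose2[OF differentiable_imp_continuous_on[OF assms(8)]])
      (auto intro!: continuous_intros)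
  have F_int: "set_integrable lborel (C k) (\<lambda>q. F k q * \<phi> q)" for k
    using set_integrable_continuous_mult[OF assms(1) F_cont assms(3)] C_sets
    by (rule set_integrable_subset) (auto simp: C_def order2_cell_def)
  have f_mono: "f (x, y) \<le> f (x', y')" if "0 \<le> x" "x \<le> x'" "0 \<le> y" "y \<le> y'" for x x' y y'
    using mono_of_nonneg_partial_derivs[OF assms(8-10) that] .
  have M_eq: "?M q = F k q" if "k \<in> pairs n" "q \<in> C k" for k q
    using Min_pairs_on_order2_cell[of f, OF f_mono assms(11)] that by (auto simp: F_def C_def)
  have "(LINT q:Q|lborel. ?M q * \<phi> q) = (LINT q:(\<Union>k \<in> pairs n. C k)|lborel. ?M q * \<phi> q)"
    using order2_cells_cover[OF assms(5)] by (simp add: C_def case_prod_unfold)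
  also have "\<dots> = (\<Sum>k \<in> pairs n. LINT q:C k|lborel. ?M q * \<phi> q)"
    using F_int M_eq AE_order2_cells_disjoint[OF assms(7)]
    by (intro set_integral_finite_UN_AE finite_pairs C_sets)
      (auto simp: C_def cong: set_integrable_cong)
  also have "\<dots> = (\<Sum>k \<in> pairs n. LINT q:C k|lborel. F k q * \<phi> q)"
    using M_eq by (intro sum.cong refl set_lebesgue_integral_cong C_sets) simp
  finally show ?thesis
    by (simp add: F_def C_def case_prod_unfold)
qed

end
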